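(* Let $f:\mathbb{R}^n\to\mathbb{R}^m$ be smooth and let $M$ be its graph in $\mathbb{R}^{n+m}$ with induced metric. Then for each $\alpha$, the Ricci operator $Rc$ and the shape operator $A^\alpha$ satisfy $$A^\alpha Rc-Rc\,A^\alpha=U^{\mu\nu}\big((\mathrm{Tr}A^\mu)R^\perp_{\nu\alpha}+R^\perp_{\alpha\mu}A^\nu+A^\mu R^\perp_{\alpha\nu}\big),$$ with summation over $\mu,\nu$.
   Context: $M=\{(x,f(x))\}$ has tangent frame $\partial_i=(e_i,f^\alpha_ie_\alpha)$, metric $g_{ij}=\delta_{ij}+f^\alpha_if^\alpha_j$, and normal vectors $\eta^\alpha=(-Df^\alpha,e_\alpha)$, $1\le\alpha\le m$. $U_{\alpha\beta}=\langle\eta^\alpha,\eta^\beta\rangle=\delta_{\alpha\beta}+\langle Df^\alpha,Df^\beta\rangle$ with inverse $U^{\alpha\beta}$. The shape operator with respect to $\eta^\alpha$ is $A^\alpha X=-(\bar\nabla_X\eta^\alpha)^\top$, i.e. $A^\alpha\partial_i=f^\alpha_{ik}g^{kj}\partial_j$. The normal curvature operators are $R^\perp_{\alpha\beta}=A^\beta A^\alpha-A^\alpha A^\beta$. The Ricci operator $Rc:TM\to TM$ is defined by $\langle Rc(X),Y\rangle=\mathrm{Ric}(X,Y)$. *)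

theory Defs
  imports "HOL-Analysis.Analysis"
begin

definition pd :: "'n::finite \<Rightarrow> (real^'n \<Rightarrow> real) \<Rightarrow> real^'n \<Rightarrow> real" where
  "pd i h x = deriv (\<lambda>t. h (x + t *\<^sub>R axis i 1)) 0"

fun pds :: "'n::finite list \<Rightarrow> (real^'n \<Rightarrow> real) \<Rightarrow> real^'n \<Rightarrow> real" where
  "pds [] h = h"
| "pds (i # is) h = pd i (pds is h)"

definition smooth_fun :: "(real^'n::finite \<Rightarrow> real) \<Rightarrow> bool" where
  "smooth_fun h \<longleftrightarrow> (\<forall>is x. pds is h differentiable (at x))"

definition smooth_map :: "(real^'n::finite \<Rightarrow> real^'m::finite) \<Rightarrow> bool" where
  "smooth_map f \<longleftrightarrow> (\<forall>\<alpha>. smooth_fun (\<lambda>x. f x $ \<alpha>))"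

definition fd1 :: "(real^'n::finite \<Rightarrow> real^'m::finite) \<Rightarrow> 'm \<Rightarrow> 'n \<Rightarrow> real^'n \<Rightarrow> real" where
  "fd1 f \<alpha> i = pd i (\<lambda>x. f x $ \<alpha>)"

definition fd2 :: "(real^'n::finite \<Rightarrow> real^'m::finite) \<Rightarrow> 'm \<Rightarrow> 'n \<Rightarrow> 'n \<Rightarrow> real^'n \<Rightarrow> real" where
  "fd2 f \<alpha> i j = pd i (pd j (\<lambda>x. f x $ \<alpha>))"

definition gmet :: "(real^'n::finite \<Rightarrow> real^'m::finite) \<Rightarrow> real^'n \<Rightarrow> real^'n^'n" where
  "gmet f x = (\<chi> i j. (if i = j then 1 else 0) + (\<Sum>\<alpha>\<in>UNIV. fd1 f \<alpha> i x * fd1 f \<alpha> j x))"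

definition ginv :: "(real^'n::finite \<Rightarrow> real^'m::finite) \<Rightarrow> real^'n \<Rightarrow> real^'n^'n" where
  "ginv f x = matrix_inv (gmet f x)"

text \<open>U_{alpha beta} = <eta^alpha, eta^beta> = delta + <Df^alpha, Df^beta>, and its inverse.\<close>
definition Umat :: "(real^'n::finite \<Rightarrow> real^'m::finite) \<Rightarrow> real^'n \<Rightarrow> real^'m^'m" where
  "Umat f x = (\<chi> \<alpha> \<beta>. (if \<alpha> = \<beta> then 1 else 0) + (\<Sum>k\<in>UNIV. fd1 f \<alpha> k x * fd1 f \<beta> k x))"

definition Uinv :: "(real^'n::finite \<Rightarrow> real^'m::finite) \<Rightarrow> real^'n \<Rightarrow> real^'m^'m" where
  "Uinv f x = matrix_inv (Umat f x)"

text \<open>Convention: an operator T on the tangent space is represented by its matrix M in the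
  frame d_1..d_n, T(d_i) = sum_j M$j$i d_j; composition of operators = matrix product.\<close>

definition Ashape :: "(real^'n::finite \<Rightarrow> real^'m::finite) \<Rightarrow> 'm \<Rightarrow> real^'n \<Rightarrow> real^'n^'n" where
  "Ashape f \<alpha> x = (\<chi> j i. \<Sum>k\<in>UNIV. fd2 f \<alpha> i k x * ginv f x $ k $ j)"

definition Rperp :: "(real^'n::finite \<Rightarrow> real^'m::finite) \<Rightarrow> 'm \<Rightarrow> 'm \<Rightarrow> real^'n \<Rightarrow> real^'n^'n" where
  "Rperp f \<alpha> \<beta> x = Ashape f \<beta> x ** Ashape f \<alpha> x - Ashape f \<alpha> x ** Ashape f \<beta> x"

definition christ :: "(real^'n::finite \<Rightarrow> real^'m::finite) \<Rightarrow> 'n \<Rightarrow> 'n \<Rightarrow> 'n \<Rightarrow> real^'n \<Rightarrow> real" where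
  "christ f k i j x = (\<Sum>l\<in>UNIV. ginv f x $ k $ l / 2 *
      (pd i (\<lambda>y. gmet f y $ j $ l) x + pd j (\<lambda>y. gmet f y $ i $ l) x - pd l (\<lambda>y. gmet f y $ i $ j) x))"

text \<open>R(d_i,d_j)d_k = R^l_ijk d_l with R(X,Y)Z = nabla_X nabla_Y Z - nabla_Y nabla_X Z - nabla_[X,Y] Z.\<close>
definition riem :: "(real^'n::finite \<Rightarrow> real^'m::finite) \<Rightarrow> 'n \<Rightarrow> 'n \<Rightarrow> 'n \<Rightarrow> 'n \<Rightarrow> real^'n \<Rightarrow> real" where
  "riem f l i j k x = pd i (christ f l j k) x - pd j (christ f l i k) x
      + (\<Sum>p\<in>UNIV. christ f p j k x * christ f l i p x - christ f p i k x * christ f l j p x)"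

definition ricci :: "(real^'n::finite \<Rightarrow> real^'m::finite) \<Rightarrow> real^'n \<Rightarrow> real^'n^'n" where
  "ricci f x = (\<chi> j k. \<Sum>i\<in>UNIV. riem f i i j k x)"

text \<open>Ricci operator: <Rc X, Y> = Ric(X,Y); matrix w.r.t. the convention above is g^{-1} Ric.\<close>
definition Rc :: "(real^'n::finite \<Rightarrow> real^'m::finite) \<Rightarrow> real^'n \<Rightarrow> real^'n^'n" where
  "Rc f x = ginv f x ** ricci f x"

end

theory Submission
  imports Defs
begin

text \<open>In graph coordinates everything is a rational expression in the Jacobian \<open>J = Df\<close>
  and the Hessians \<open>S\<^sup>\<alpha> = D\<^sup>2f\<^sup>\<alpha>\<close>: \<open>g = I + J\<^sup>TJ\<close>,
  \<open>U = I + JJ\<^sup>T\<close> with \<open>U\<^sup>-\<^sup>1 = I - Jg\<^sup>-\<^sup>1J\<^sup>T\<close>, and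
  \<open>A\<^sup>\<alpha> = g\<^sup>-\<^sup>1S\<^sup>\<alpha>\<close>. Differentiating the Christoffel symbols
  \<open>\<Gamma>\<^sub>i = g\<^sup>-\<^sup>1J\<^sup>T(\<partial>\<^sub>iJ)\<close> gives the Gauss equation, whose trace is
  \<open>Rc = U\<^sup>\<mu>\<^sup>\<nu>((Tr A\<^sup>\<mu>) A\<^sup>\<nu> - A\<^sup>\<mu>A\<^sup>\<nu>)\<close>; the third derivatives of
  \<open>f\<close> drop out by the symmetry of mixed partials. The commutator of \<open>A\<^sup>\<alpha>\<close> with this
  quadratic expression is then pure matrix algebra.\<close>

section \<open>Partial derivatives\<close>

lemma has_derivative_along_line:
  fixes h :: "real^'n::finite \<Rightarrow> real"
  assumes "(h has_derivative D) (at (x + t *\<^sub>R v))"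
  shows "((\<lambda>s. h (x + s *\<^sub>R v)) has_real_derivative D v) (at t)"
proof -
  have "((\<lambda>s. x + s *\<^sub>R v) has_derivative (\<lambda>s. s *\<^sub>R v)) (at t)"
    by (auto intro!: derivative_eq_intros)
  from has_derivative_compose[OF this assms]
  have "((\<lambda>s. h (x + s *\<^sub>R v)) has_derivative (\<lambda>s. D (s *\<^sub>R v))) (at t)" .
  moreover have "(\<lambda>s. D (s *\<^sub>R v)) = (\<lambda>s. D v * s)"
    using assms has_derivative_linear linear_scale by fastforce
  ultimately show ?thesis by (simp add: has_field_derivative_def)
qed

lemma pd_has_derivative:
  fixes h :: "real^'n::finite \<Rightarrow> real"
  assumes "(h has_derivative D) (at x)"
  shows "pd i h x = D (axis i 1)"
  unfolding pd_def using has_derivative_along_line[of h D x 0] assms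
  by (simp add: DERIV_imp_deriv)

lemma has_real_derivative_pd_along_axis:
  fixes h :: "real^'n::finite \<Rightarrow> real"
  assumes "h differentiable (at (x + t *\<^sub>R axis i 1))"
  shows "((\<lambda>s. h (x + s *\<^sub>R axis i 1)) has_real_derivative pd i h (x + t *\<^sub>R axis i 1)) (at t)"
proof -
  obtain D where "(h has_derivative D) (at (x + t *\<^sub>R axis i 1))"
    using assms differentiable_def by blast
  then show ?thesis by (simp add: has_derivative_along_line pd_has_derivative)
qed

lemma pd_const: "pd i (\<lambda>y. c) x = 0"
  using pd_has_derivative[of "\<lambda>y. c" "\<lambda>_. 0"] by simp

lemma pd_add:
  fixes u v :: "real^'n::finite \<Rightarrow> real"
  assumes "u differentiable (at x)" "v differentiable (at x)"
  shows "pd i (\<lambda>y. u y + v y) x = pd i u x + pd i v x"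
proof -
  obtain Du Dv where u: "(u has_derivative Du) (at x)" and v: "(v has_derivative Dv) (at x)"
    using assms by (auto simp: differentiable_def)
  show ?thesis
    using pd_has_derivative[OF has_derivative_add[OF u v]]
    by (simp add: pd_has_derivative[OF u] pd_has_derivative[OF v])
qed

lemma pd_mult:
  fixes u v :: "real^'n::finite \<Rightarrow> real"
  assumes "u differentiable (at x)" "v differentiable (at x)"
  shows "pd i (\<lambda>y. u y * v y) x = pd i u x * v x + u x * pd i v x"
proof -
  obtain Du Dv where u: "(u has_derivative Du) (at x)" and v: "(v has_derivative Dv) (at x)"
    using assms by (auto simp: differentiable_def)
  have "pd i (\<lambda>y. u y * v y) x = u x * Dv (axis i 1) + Du (axis i 1) * v x"
    by (rule pd_has_derivative[OF has_derivative_mult[OF u v]])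
  then show ?thesis
    by (simp add: pd_has_derivative[OF u] pd_has_derivative[OF v] add.commute)
qed

lemma pd_sum:
  fixes u :: "'a \<Rightarrow> real^'n::finite \<Rightarrow> real"
  assumes "finite A" "\<And>a. a \<in> A \<Longrightarrow> u a differentiable (at x)"
  shows "pd i (\<lambda>y. \<Sum>a\<in>A. u a y) x = (\<Sum>a\<in>A. pd i (u a) x)"
  using assms
proof (induction A rule: finite_induct)
  case empty
  then show ?case by (simp add: pd_const)
next
  case (insert a A)
  have "(\<lambda>y. \<Sum>a\<in>A. u a y) differentiable (at x)"
    using insert by (intro differentiable_sum) auto
  with insert show ?case by (simp add: pd_add)
qed

lemma second_difference_mvt:
  fixes h :: "real^'n::finite \<Rightarrow> real"
  assumes h: "\<And>y. h differentiable (at y)" and hi: "\<And>y. pd i h differentiable (at y)"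
    and t: "t > 0"
  shows "\<exists>p. dist p x \<le> 2 * t \<and>
     h (x + t *\<^sub>R axis i 1 + t *\<^sub>R axis j 1) - h (x + t *\<^sub>R axis i 1) - h (x + t *\<^sub>R axis j 1) + h x
       = t * t * pd j (pd i h) p"
proof -
  let ?ei = "axis i 1 :: real^'n" and ?ej = "axis j 1 :: real^'n"
  define \<phi> where "\<phi> s = h ((x + t *\<^sub>R ?ej) + s *\<^sub>R ?ei) - h (x + s *\<^sub>R ?ei)" for s
  have "(\<phi> has_real_derivative pd i h ((x + t *\<^sub>R ?ej) + s *\<^sub>R ?ei) - pd i h (x + s *\<^sub>R ?ei)) (at s)"
    for s unfolding \<phi>_def by (intro DERIV_diff has_real_derivative_pd_along_axis h)
  from MVT2[OF t this] obtain \<sigma> where \<sigma>: "0 < \<sigma>" "\<sigma> < t" and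
    \<phi>_mvt: "\<phi> t - \<phi> 0 = t * (pd i h ((x + \<sigma> *\<^sub>R ?ei) + t *\<^sub>R ?ej) - pd i h ((x + \<sigma> *\<^sub>R ?ei) + 0 *\<^sub>R ?ej))"
    by (auto simp: add_ac)
  from MVT2[OF t has_real_derivative_pd_along_axis[OF hi]] obtain \<tau> where \<tau>: "0 < \<tau>" "\<tau> < t" and
    "pd i h ((x + \<sigma> *\<^sub>R ?ei) + t *\<^sub>R ?ej) - pd i h ((x + \<sigma> *\<^sub>R ?ei) + 0 *\<^sub>R ?ej)
       = t * pd j (pd i h) ((x + \<sigma> *\<^sub>R ?ei) + \<tau> *\<^sub>R ?ej)"
    by (metis diff_zero)
  with \<phi>_mvt have "\<phi> t - \<phi> 0 = t * t * pd j (pd i h) ((x + \<sigma> *\<^sub>R ?ei) + \<tau> *\<^sub>R ?ej)"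
    by simp
  moreover have "\<phi> t - \<phi> 0 = h (x + t *\<^sub>R ?ei + t *\<^sub>R ?ej) - h (x + t *\<^sub>R ?ei) - h (x + t *\<^sub>R ?ej) + h x"
    unfolding \<phi>_def by (simp add: add_ac)
  moreover have "dist ((x + \<sigma> *\<^sub>R ?ei) + \<tau> *\<^sub>R ?ej) x \<le> 2 * t"
    using norm_triangle_ineq[of "\<sigma> *\<^sub>R ?ei" "\<tau> *\<^sub>R ?ej"] \<sigma> \<tau> by (simp add: dist_norm)
  ultimately show ?thesis by metis
qed

lemma pd_commute:
  fixes h :: "real^'n::finite \<Rightarrow> real"
  assumes h: "\<And>y. h differentiable (at y)"
    and hi: "\<And>y. pd i h differentiable (at y)" and hj: "\<And>y. pd j h differentiable (at y)"
    and cont_ij: "continuous (at x) (pd j (pd i h))" and cont_ji: "continuous (at x) (pd i (pd j h))"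
  shows "pd j (pd i h) x = pd i (pd j h) x"
proof (rule ccontr)
  let ?a = "pd j (pd i h) x" and ?b = "pd i (pd j h) x"
  assume "?a \<noteq> ?b"
  define \<epsilon> where "\<epsilon> = \<bar>?a - ?b\<bar> / 2"
  have "\<epsilon> > 0" using \<open>?a \<noteq> ?b\<close> by (simp add: \<epsilon>_def)
  obtain d1 where d1: "d1 > 0" "\<And>y. dist y x < d1 \<Longrightarrow> dist (pd j (pd i h) y) ?a < \<epsilon>"
    using cont_ij \<open>\<epsilon> > 0\<close> unfolding continuous_at_eps_delta by blast
  obtain d2 where d2: "d2 > 0" "\<And>y. dist y x < d2 \<Longrightarrow> dist (pd i (pd j h) y) ?b < \<epsilon>"
    using cont_ji \<open>\<epsilon> > 0\<close> unfolding continuous_at_eps_delta by blast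
  define t where "t = min d1 d2 / 4"
  have "t > 0" using d1 d2 by (simp add: t_def)
  obtain p where p: "dist p x \<le> 2 * t"
    "h (x + t *\<^sub>R axis i 1 + t *\<^sub>R axis j 1) - h (x + t *\<^sub>R axis i 1) - h (x + t *\<^sub>R axis j 1) + h x
       = t * t * pd j (pd i h) p"
    using second_difference_mvt[OF h hi \<open>t > 0\<close>] by blast
  obtain q where q: "dist q x \<le> 2 * t"
    "h (x + t *\<^sub>R axis j 1 + t *\<^sub>R axis i 1) - h (x + t *\<^sub>R axis j 1) - h (x + t *\<^sub>R axis i 1) + h x
       = t * t * pd i (pd j h) q"
    using second_difference_mvt[OF h hj \<open>t > 0\<close>] by blast
  have "h (x + t *\<^sub>R axis j 1 + t *\<^sub>R axis i 1) = h (x + t *\<^sub>R axis i 1 + t *\<^sub>R axis j 1)"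
    by (simp add: add_ac)
  with p(2) q(2) have "t * t * pd j (pd i h) p = t * t * pd i (pd j h) q"
    by linarith
  then have "pd j (pd i h) p = pd i (pd j h) q" using \<open>t > 0\<close> by simp
  moreover have "dist p x < d1" "dist q x < d2" using p(1) q(1) \<open>t > 0\<close> by (auto simp: t_def)
  ultimately have "\<bar>?a - ?b\<bar> < 2 * \<epsilon>"
    using d1(2)[of p] d2(2)[of q] by (simp add: dist_real_def)
  then show False by (simp add: \<epsilon>_def)
qed

section \<open>Matrix algebra\<close>

lemma matrix_add_rdistrib: "(A + B) ** C = A ** C + B ** (C :: 'a::semiring_1^'p^'n)"
  by (simp add: matrix_matrix_mult_def vec_eq_iff sum.distrib algebra_simps)

lemma matrix_diff_ldistrib: "A ** (B - C) = A ** B - A ** (C :: 'a::ring_1^'p^'n)"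
  by (simp add: matrix_matrix_mult_def vec_eq_iff sum_subtractf algebra_simps)

lemma matrix_diff_rdistrib: "(A - B) ** C = A ** C - B ** (C :: 'a::ring_1^'p^'n)"
  by (simp add: matrix_matrix_mult_def vec_eq_iff sum_subtractf algebra_simps)

lemma matrix_minus_left: "(- A) ** C = - (A ** (C :: 'a::ring_1^'p^'n))"
  by (simp add: matrix_matrix_mult_def vec_eq_iff sum_negf)

lemma matrix_sum_left: "(\<Sum>i\<in>I. A i) ** B = (\<Sum>i\<in>I. A i ** (B :: 'a::semiring_1^'p^'n))"
  by (induction I rule: infinite_finite_induct) (simp_all add: matrix_add_rdistrib)

lemma matrix_sum_right: "B ** (\<Sum>i\<in>I. A i) = (\<Sum>i\<in>I. B ** (A i :: 'a::semiring_1^'p^'n))"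
  by (induction I rule: infinite_finite_induct) (simp_all add: matrix_add_ldistrib)

lemma transpose_add: "transpose (A + B) = transpose A + transpose (B :: 'a::plus^'n^'m)"
  by (simp add: transpose_def vec_eq_iff)

lemmas matrix_ring_simps = matrix_add_ldistrib matrix_add_rdistrib matrix_diff_ldistrib
  matrix_diff_rdistrib matrix_minus_left transpose_add matrix_transpose_mul matrix_mul_assoc

lemma matrix_inv_right:
  fixes A :: "'a::semiring_1^'n^'n"
  assumes "invertible A"
  shows "A ** matrix_inv A = mat 1"
  using assms someI_ex[of "\<lambda>A'. A ** A' = mat 1 \<and> A' ** A = mat 1"]
  by (simp add: invertible_def matrix_inv_def)

lemma matrix_inv_left:
  fixes A :: "'a::semiring_1^'n^'n"
  assumes "invertible A"
  shows "matrix_inv A ** A = mat 1"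
  using assms someI_ex[of "\<lambda>A'. A ** A' = mat 1 \<and> A' ** A = mat 1"]
  by (simp add: invertible_def matrix_inv_def)

lemma matrix_inv_unique:
  fixes A B :: "real^'n^'n"
  assumes "A ** B = mat 1"
  shows "matrix_inv A = B"
proof -
  have "invertible A" using assms invertible_right_inverse by blast
  have "matrix_inv A = (matrix_inv A ** A) ** B"
    by (simp add: assms flip: matrix_mul_assoc)
  also have "\<dots> = B" by (simp add: matrix_inv_left[OF \<open>invertible A\<close>])
  finally show ?thesis .
qed

lemma symmetric_matrix_inv:
  fixes A :: "real^'n^'n"
  assumes "invertible A" "transpose A = A"
  shows "matrix_inv A $ i $ j = matrix_inv A $ j $ i"
proof -
  have "transpose (matrix_inv A ** A) = mat 1"
    by (simp add: matrix_inv_left[OF assms(1)])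
  then have "A ** transpose (matrix_inv A) = mat 1"
    by (simp only: matrix_transpose_mul assms(2))
  then have "matrix_inv A = transpose (matrix_inv A)"
    by (rule matrix_inv_unique)
  then have "matrix_inv A $ i $ j = transpose (matrix_inv A) $ i $ j"
    by (rule arg_cong)
  then show ?thesis by (simp add: transpose_def)
qed

lemma invertible_mat_1_plus_gram:
  fixes J :: "real^'n^'m"
  shows "invertible (mat 1 + transpose J ** J)"
proof -
  have "v = 0" if "(mat 1 + transpose J ** J) *v v = 0" for v
  proof -
    from that have "v + transpose J *v (J *v v) = 0"
      by (simp add: matrix_vector_mult_add_rdistrib matrix_vector_mul_assoc)
    then have "inner v v + inner (J *v v) (J *v v) = 0"
      by (metis dot_lmul_matrix inner_add_right inner_commute inner_zero_right transpose_matrix_vector)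
    then show "v = 0"
      by (metis add_nonneg_eq_0_iff inner_eq_zero_iff inner_ge_zero)
  qed
  then show ?thesis
    using invertible_left_inverse matrix_left_invertible_ker by blast
qed

lemma matrix_inv_mat_1_plus_cogram:
  fixes J :: "real^'n^'m" and G :: "real^'n^'n"
  assumes "(mat 1 + transpose J ** J) ** G = mat 1"
  shows "matrix_inv (mat 1 + J ** transpose J) = mat 1 - J ** G ** transpose J"
proof (rule matrix_inv_unique)
  have "J ** ((mat 1 + transpose J ** J) ** G) ** transpose J = J ** transpose J"
    using assms by simp
  then have "J ** G ** transpose J + J ** transpose J ** J ** G ** transpose J = J ** transpose J"
    by (simp add: matrix_ring_simps)
  then show "(mat 1 + J ** transpose J) ** (mat 1 - J ** G ** transpose J) = mat 1"
    by (simp add: matrix_ring_simps algebra_simps)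
qed

lemma matrix_inv_cramer:
  fixes A :: "real^'n^'n"
  assumes "invertible A"
  shows "matrix_inv A $ k $ j = det (\<chi> i l. if l = k then (if i = j then 1 else 0) else A $ i $ l) / det A"
proof -
  have "A *v (matrix_inv A *v axis j 1) = axis j 1"
    by (simp add: matrix_vector_mul_assoc matrix_inv_right[OF assms])
  then have "matrix_inv A *v axis j 1
      = (\<chi> k. det (\<chi> i l. if l = k then axis j 1 $ i else A $ i $ l) / det A)"
    using cramer assms invertible_det_nz by blast
  moreover have "(matrix_inv A *v axis j 1) $ k = matrix_inv A $ k $ j"
    by (simp add: matrix_vector_mult_def axis_def if_distrib if_distribR cong: if_cong)
  ultimately show ?thesis by (simp add: axis_def cong: if_cong)
qed

section \<open>Derivatives of matrix-valued functions\<close>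

definition pd_matrix :: "'n::finite \<Rightarrow> (real^'n \<Rightarrow> real^'a::finite^'b::finite) \<Rightarrow> real^'n \<Rightarrow> real^'a^'b" where
  "pd_matrix i M x = (\<chi> p q. pd i (\<lambda>y. M y $ p $ q) x)"

definition matrix_differentiable_at :: "(real^'n::finite \<Rightarrow> real^'a::finite^'b::finite) \<Rightarrow> real^'n \<Rightarrow> bool" where
  "matrix_differentiable_at M x \<longleftrightarrow> (\<forall>p q. (\<lambda>y. M y $ p $ q) differentiable (at x))"

lemma matrix_differentiable_at_const: "matrix_differentiable_at (\<lambda>y. C) x"
  by (simp add: matrix_differentiable_at_def)

lemma matrix_differentiable_at_mult:
  "matrix_differentiable_at A x \<Longrightarrow> matrix_differentiable_at B x \<Longrightarrow>
    matrix_differentiable_at (\<lambda>y. A y ** B y) x"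
  by (simp add: matrix_differentiable_at_def matrix_matrix_mult_def)

lemma matrix_differentiable_at_transpose:
  "matrix_differentiable_at A x \<Longrightarrow> matrix_differentiable_at (\<lambda>y. transpose (A y)) x"
  by (simp add: matrix_differentiable_at_def transpose_def)

lemma pd_matrix_const: "pd_matrix i (\<lambda>y. C) x = 0"
  by (simp add: pd_matrix_def pd_const vec_eq_iff)

lemma pd_matrix_add:
  "matrix_differentiable_at A x \<Longrightarrow> matrix_differentiable_at B x \<Longrightarrow>
    pd_matrix i (\<lambda>y. A y + B y) x = pd_matrix i A x + pd_matrix i B x"
  by (simp add: pd_matrix_def matrix_differentiable_at_def pd_add vec_eq_iff)

lemma pd_matrix_mult:
  "matrix_differentiable_at A x \<Longrightarrow> matrix_differentiable_at B x \<Longrightarrow>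
    pd_matrix i (\<lambda>y. A y ** B y) x = pd_matrix i A x ** B x + A x ** pd_matrix i B x"
  by (simp add: pd_matrix_def matrix_differentiable_at_def matrix_matrix_mult_def vec_eq_iff
      pd_sum pd_mult sum.distrib)

lemma pd_matrix_transpose: "pd_matrix i (\<lambda>y. transpose (A y)) x = transpose (pd_matrix i A x)"
  by (simp add: pd_matrix_def transpose_def)

lemma differentiable_prod:
  fixes u :: "'i \<Rightarrow> real^'n::finite \<Rightarrow> real"
  assumes "\<And>i. i \<in> I \<Longrightarrow> u i differentiable (at x)"
  shows "(\<lambda>y. \<Prod>i\<in>I. u i y) differentiable (at x)"
proof -
  from assms obtain D where "\<And>i. i \<in> I \<Longrightarrow> (u i has_derivative D i) (at x)"
    unfolding differentiable_def by metis
  then show ?thesis unfolding differentiable_def by (blast intro: has_derivative_prod)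
qed

lemma differentiable_det:
  "matrix_differentiable_at M x \<Longrightarrow> (\<lambda>y. det (M y)) differentiable (at x)"
  unfolding det_def matrix_differentiable_at_def
  by (intro differentiable_sum differentiable_mult differentiable_const differentiable_prod ballI)
     (auto simp: finite_permutations)

lemma matrix_differentiable_at_matrix_inv:
  fixes M :: "real^'k::finite \<Rightarrow> real^'n::finite^'n"
  assumes "matrix_differentiable_at M x" and "\<And>y. invertible (M y)"
  shows "matrix_differentiable_at (\<lambda>y. matrix_inv (M y)) x"
  unfolding matrix_differentiable_at_def
proof (intro allI)
  fix k j
  let ?Mkj = "\<lambda>y. \<chi> i l. if l = k then (if i = j then 1 else 0) else M y $ i $ l"
  have "(\<lambda>y. ?Mkj y $ p $ q) differentiable (at x)" for p q
    using assms(1) by (cases "q = k") (simp_all add: matrix_differentiable_at_def)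
  then have "matrix_differentiable_at ?Mkj x"
    unfolding matrix_differentiable_at_def by blast
  then have "(\<lambda>y. det (?Mkj y) / det (M y)) differentiable (at x)"
    using assms invertible_det_nz by (intro differentiable_divide differentiable_det) auto
  then show "(\<lambda>y. matrix_inv (M y) $ k $ j) differentiable (at x)"
    by (simp add: matrix_inv_cramer[OF assms(2)])
qed

lemma pd_matrix_matrix_inv:
  fixes M :: "real^'k::finite \<Rightarrow> real^'n::finite^'n"
  assumes M: "matrix_differentiable_at M x" and inv: "\<And>y. invertible (M y)"
  shows "pd_matrix i (\<lambda>y. matrix_inv (M y)) x = - (matrix_inv (M x) ** pd_matrix i M x ** matrix_inv (M x))"
proof -
  have "pd_matrix i M x ** matrix_inv (M x) + M x ** pd_matrix i (\<lambda>y. matrix_inv (M y)) x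
      = pd_matrix i (\<lambda>y. M y ** matrix_inv (M y)) x"
    by (simp add: pd_matrix_mult M matrix_differentiable_at_matrix_inv[OF M inv])
  also have "\<dots> = 0"
    by (simp add: matrix_inv_right[OF inv] pd_matrix_const)
  finally have "matrix_inv (M x) ** (pd_matrix i M x ** matrix_inv (M x)
      + M x ** pd_matrix i (\<lambda>y. matrix_inv (M y)) x) = 0"
    by simp
  then have "matrix_inv (M x) ** pd_matrix i M x ** matrix_inv (M x)
      + pd_matrix i (\<lambda>y. matrix_inv (M y)) x = 0"
    by (simp add: matrix_ring_simps matrix_inv_left[OF inv])
  then show ?thesis by (simp add: eq_neg_iff_add_eq_0 add.commute)
qed

section \<open>Contractions and curvature identities\<close>

lemma sum_swap_outer:
  "(\<Sum>a\<in>A. \<Sum>b\<in>B. \<Sum>c\<in>C. g a b c) = (\<Sum>c\<in>C. \<Sum>b\<in>B. \<Sum>a\<in>A. g a b c)"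
proof -
  have "(\<Sum>a\<in>A. \<Sum>b\<in>B. \<Sum>c\<in>C. g a b c) = (\<Sum>b\<in>B. \<Sum>a\<in>A. \<Sum>c\<in>C. g a b c)"
    by (rule sum.swap)
  also have "\<dots> = (\<Sum>b\<in>B. \<Sum>c\<in>C. \<Sum>a\<in>A. g a b c)"
    by (rule sum.cong[OF refl], rule sum.swap)
  also have "\<dots> = (\<Sum>c\<in>C. \<Sum>b\<in>B. \<Sum>a\<in>A. g a b c)"
    by (rule sum.swap)
  finally show ?thesis .
qed

lemma trace_contraction_left:
  fixes G :: "real^'n::finite^'n" and S :: "'m::finite \<Rightarrow> real^'n^'n" and P :: "real^'m^'m"
  assumes S_sym: "\<And>\<alpha> a b. S \<alpha> $ a $ b = S \<alpha> $ b $ a"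
  shows "(\<Sum>i\<in>UNIV. (G ** transpose (\<chi> \<alpha> k. S \<alpha> $ i $ k) ** P ** (\<chi> \<alpha> k. S \<alpha> $ j $ k)) $ i $ k)
    = (\<Sum>\<alpha>\<in>UNIV. \<Sum>\<beta>\<in>UNIV. P $ \<alpha> $ \<beta> * trace (G ** S \<alpha>) * S \<beta> $ j $ k)"
proof -
  have "(\<Sum>i\<in>UNIV. (G ** transpose (\<chi> \<alpha> k. S \<alpha> $ i $ k) ** P ** (\<chi> \<alpha> k. S \<alpha> $ j $ k)) $ i $ k)
      = (\<Sum>i\<in>UNIV. \<Sum>\<beta>\<in>UNIV. \<Sum>\<alpha>\<in>UNIV. \<Sum>a\<in>UNIV. G $ i $ a * (S \<alpha> $ i $ a * (P $ \<alpha> $ \<beta> * S \<beta> $ j $ k)))"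
    by (simp add: matrix_matrix_mult_def transpose_def sum_distrib_left sum_distrib_right mult.assoc)
  also have "\<dots> = (\<Sum>\<alpha>\<in>UNIV. \<Sum>\<beta>\<in>UNIV. \<Sum>i\<in>UNIV. \<Sum>a\<in>UNIV. G $ i $ a * (S \<alpha> $ i $ a * (P $ \<alpha> $ \<beta> * S \<beta> $ j $ k)))"
    by (rule sum_swap_outer)
  also have "\<dots> = (\<Sum>\<alpha>\<in>UNIV. \<Sum>\<beta>\<in>UNIV. P $ \<alpha> $ \<beta> * trace (G ** S \<alpha>) * S \<beta> $ j $ k)"
  proof (intro sum.cong refl)
    fix \<alpha> \<beta>
    have "trace (G ** S \<alpha>) = (\<Sum>i\<in>UNIV. \<Sum>a\<in>UNIV. G $ i $ a * S \<alpha> $ i $ a)"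
      by (simp add: trace_def matrix_matrix_mult_def S_sym)
    then show "(\<Sum>i\<in>UNIV. \<Sum>a\<in>UNIV. G $ i $ a * (S \<alpha> $ i $ a * (P $ \<alpha> $ \<beta> * S \<beta> $ j $ k)))
        = P $ \<alpha> $ \<beta> * trace (G ** S \<alpha>) * S \<beta> $ j $ k"
      by (simp add: sum_distrib_left sum_distrib_right mult_ac)
  qed
  finally show ?thesis .
qed

lemma trace_contraction_right:
  fixes G :: "real^'n::finite^'n" and S :: "'m::finite \<Rightarrow> real^'n^'n" and P :: "real^'m^'m"
  assumes G_sym: "\<And>a b. G $ a $ b = G $ b $ a"
  shows "(\<Sum>i\<in>UNIV. (G ** transpose (\<chi> \<alpha> k. S \<alpha> $ j $ k) ** P ** (\<chi> \<alpha> k. S \<alpha> $ i $ k)) $ i $ k)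
    = (\<Sum>\<alpha>\<in>UNIV. \<Sum>\<beta>\<in>UNIV. P $ \<alpha> $ \<beta> * (S \<alpha> ** G ** S \<beta>) $ j $ k)"
proof -
  have "(\<Sum>i\<in>UNIV. (G ** transpose (\<chi> \<alpha> k. S \<alpha> $ j $ k) ** P ** (\<chi> \<alpha> k. S \<alpha> $ i $ k)) $ i $ k)
      = (\<Sum>i\<in>UNIV. \<Sum>\<beta>\<in>UNIV. \<Sum>\<alpha>\<in>UNIV. \<Sum>a\<in>UNIV. G $ i $ a * (S \<alpha> $ j $ a * (P $ \<alpha> $ \<beta> * S \<beta> $ i $ k)))"
    by (simp add: matrix_matrix_mult_def transpose_def sum_distrib_left sum_distrib_right mult.assoc)
  also have "\<dots> = (\<Sum>\<alpha>\<in>UNIV. \<Sum>\<beta>\<in>UNIV. \<Sum>i\<in>UNIV. \<Sum>a\<in>UNIV. G $ i $ a * (S \<alpha> $ j $ a * (P $ \<alpha> $ \<beta> * S \<beta> $ i $ k)))"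
    by (rule sum_swap_outer)
  also have "\<dots> = (\<Sum>\<alpha>\<in>UNIV. \<Sum>\<beta>\<in>UNIV. P $ \<alpha> $ \<beta> * (S \<alpha> ** G ** S \<beta>) $ j $ k)"
  proof (intro sum.cong refl)
    fix \<alpha> \<beta>
    have "(S \<alpha> ** G ** S \<beta>) $ j $ k = (\<Sum>i\<in>UNIV. \<Sum>a\<in>UNIV. S \<alpha> $ j $ a * G $ a $ i * S \<beta> $ i $ k)"
      by (simp add: matrix_matrix_mult_def sum_distrib_right)
    also have "\<dots> = (\<Sum>i\<in>UNIV. \<Sum>a\<in>UNIV. G $ i $ a * S \<alpha> $ j $ a * S \<beta> $ i $ k)"
      by (subst G_sym) (simp add: mult_ac)
    finally show "(\<Sum>i\<in>UNIV. \<Sum>a\<in>UNIV. G $ i $ a * (S \<alpha> $ j $ a * (P $ \<alpha> $ \<beta> * S \<beta> $ i $ k)))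
        = P $ \<alpha> $ \<beta> * (S \<alpha> ** G ** S \<beta>) $ j $ k"
      by (simp add: sum_distrib_left mult_ac)
  qed
  finally show ?thesis .
qed

lemma ricci_contraction:
  fixes G :: "real^'n::finite^'n" and S :: "'m::finite \<Rightarrow> real^'n^'n" and P :: "real^'m^'m"
  assumes "\<And>a b. G $ a $ b = G $ b $ a" and "\<And>\<alpha> a b. S \<alpha> $ a $ b = S \<alpha> $ b $ a"
  shows "(\<Sum>i\<in>UNIV. (G ** (transpose (\<chi> \<alpha> k. S \<alpha> $ i $ k) ** P ** (\<chi> \<alpha> k. S \<alpha> $ j $ k)
      - transpose (\<chi> \<alpha> k. S \<alpha> $ j $ k) ** P ** (\<chi> \<alpha> k. S \<alpha> $ i $ k))) $ i $ k)
    = (\<Sum>\<alpha>\<in>UNIV. \<Sum>\<beta>\<in>UNIV. P $ \<alpha> $ \<beta> *\<^sub>R (trace (G ** S \<alpha>) *\<^sub>R S \<beta> - S \<alpha> ** G ** S \<beta>)) $ j $ k"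
proof -
  have "(\<Sum>i\<in>UNIV. (G ** (transpose (\<chi> \<alpha> k. S \<alpha> $ i $ k) ** P ** (\<chi> \<alpha> k. S \<alpha> $ j $ k)
      - transpose (\<chi> \<alpha> k. S \<alpha> $ j $ k) ** P ** (\<chi> \<alpha> k. S \<alpha> $ i $ k))) $ i $ k)
    = (\<Sum>i\<in>UNIV. (G ** transpose (\<chi> \<alpha> k. S \<alpha> $ i $ k) ** P ** (\<chi> \<alpha> k. S \<alpha> $ j $ k)) $ i $ k)
      - (\<Sum>i\<in>UNIV. (G ** transpose (\<chi> \<alpha> k. S \<alpha> $ j $ k) ** P ** (\<chi> \<alpha> k. S \<alpha> $ i $ k)) $ i $ k)"
    by (simp add: matrix_diff_ldistrib matrix_mul_assoc sum_subtractf)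
  then show ?thesis
    unfolding trace_contraction_left[OF assms(2)] trace_contraction_right[OF assms(1)]
    by (simp add: sum_subtractf algebra_simps)
qed

text \<open>With \<open>E\<^sub>i = \<partial>\<^sub>i J\<close>, \<open>C\<^sub>i = J\<^sup>T E\<^sub>i\<close>, \<open>\<Gamma>\<^sub>i = G C\<^sub>i\<close> and
  \<open>\<partial>\<^sub>i G = -G (C\<^sub>i\<^sup>T + C\<^sub>i) G\<close>, this is the curvature
  \<open>\<partial>\<^sub>i \<Gamma>\<^sub>j - \<partial>\<^sub>j \<Gamma>\<^sub>i + \<Gamma>\<^sub>i \<Gamma>\<^sub>j - \<Gamma>\<^sub>j \<Gamma>\<^sub>i\<close>;
  the third derivatives \<open>T\<close> cancel because they are symmetric in \<open>i, j\<close>.\<close>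
lemma curvature_matrix_identity:
  fixes G T :: "real^'n::finite^'n" and J Ei Ej :: "real^'n^'m::finite"
  shows "(- (G ** (transpose (transpose J ** Ei) + transpose J ** Ei) ** G) ** (transpose J ** Ej)
        + G ** (transpose Ei ** Ej + T))
    - (- (G ** (transpose (transpose J ** Ej) + transpose J ** Ej) ** G) ** (transpose J ** Ei)
        + G ** (transpose Ej ** Ei + T))
    + (G ** (transpose J ** Ei)) ** (G ** (transpose J ** Ej))
    - (G ** (transpose J ** Ej)) ** (G ** (transpose J ** Ei))
  = G ** (transpose Ei ** (mat 1 - J ** G ** transpose J) ** Ej
        - transpose Ej ** (mat 1 - J ** G ** transpose J) ** Ei)"
  by (simp add: matrix_ring_simps algebra_simps)

lemma commutator_trace_quadratic_sum:
  fixes A :: "'m::finite \<Rightarrow> real^'n::finite^'n" and P :: "real^'m^'m"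
  defines "Q \<equiv> \<Sum>\<mu>\<in>UNIV. \<Sum>\<nu>\<in>UNIV. P $ \<mu> $ \<nu> *\<^sub>R (trace (A \<mu>) *\<^sub>R A \<nu> - A \<mu> ** A \<nu>)"
  shows "A \<alpha> ** Q - Q ** A \<alpha>
    = (\<Sum>\<mu>\<in>UNIV. \<Sum>\<nu>\<in>UNIV. P $ \<mu> $ \<nu> *\<^sub>R
         (trace (A \<mu>) *\<^sub>R (A \<alpha> ** A \<nu> - A \<nu> ** A \<alpha>) + (A \<mu> ** A \<alpha> - A \<alpha> ** A \<mu>) ** A \<nu>
          + A \<mu> ** (A \<nu> ** A \<alpha> - A \<alpha> ** A \<nu>)))"
proof -
  have "A \<alpha> ** Q - Q ** A \<alpha>
      = (\<Sum>\<mu>\<in>UNIV. \<Sum>\<nu>\<in>UNIV. A \<alpha> ** (P $ \<mu> $ \<nu> *\<^sub>R (trace (A \<mu>) *\<^sub>R A \<nu> - A \<mu> ** A \<nu>))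
           - (P $ \<mu> $ \<nu> *\<^sub>R (trace (A \<mu>) *\<^sub>R A \<nu> - A \<mu> ** A \<nu>)) ** A \<alpha>)"
    by (simp add: Q_def matrix_sum_left matrix_sum_right sum_subtractf)
  also have "\<dots> = (\<Sum>\<mu>\<in>UNIV. \<Sum>\<nu>\<in>UNIV. P $ \<mu> $ \<nu> *\<^sub>R
         (trace (A \<mu>) *\<^sub>R (A \<alpha> ** A \<nu> - A \<nu> ** A \<alpha>) + (A \<mu> ** A \<alpha> - A \<alpha> ** A \<mu>) ** A \<nu>
          + A \<mu> ** (A \<nu> ** A \<alpha> - A \<alpha> ** A \<nu>)))"
    by (intro sum.cong refl)
      (simp add: matrix_ring_simps matrix_scalar_ac scalar_matrix_assoc[symmetric]
        scaleR_right_diff_distrib scaleR_right_distrib algebra_simps)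
  finally show ?thesis .
qed

section \<open>Graphs of smooth maps\<close>

definition jac :: "(real^'n::finite \<Rightarrow> real^'m::finite) \<Rightarrow> real^'n \<Rightarrow> real^'n^'m" where
  "jac f y = (\<chi> \<alpha> i. fd1 f \<alpha> i y)"

definition hess :: "(real^'n::finite \<Rightarrow> real^'m::finite) \<Rightarrow> 'm \<Rightarrow> real^'n \<Rightarrow> real^'n^'n" where
  "hess f \<alpha> y = (\<chi> a b. fd2 f \<alpha> a b y)"

definition hess_slice :: "(real^'n::finite \<Rightarrow> real^'m::finite) \<Rightarrow> 'n \<Rightarrow> real^'n \<Rightarrow> real^'n^'m" where
  "hess_slice f i y = (\<chi> \<alpha> k. hess f \<alpha> y $ i $ k)"

definition christ_matrix :: "(real^'n::finite \<Rightarrow> real^'m::finite) \<Rightarrow> 'n \<Rightarrow> real^'n \<Rightarrow> real^'n^'n" where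
  "christ_matrix f i y = (\<chi> l k. christ f l i k y)"

lemma gmet_eq: "gmet f y = mat 1 + transpose (jac f y) ** jac f y"
  by (simp add: gmet_def jac_def mat_def matrix_matrix_mult_def transpose_def vec_eq_iff)

lemma Umat_eq: "Umat f y = mat 1 + jac f y ** transpose (jac f y)"
  by (simp add: Umat_def jac_def mat_def matrix_matrix_mult_def transpose_def vec_eq_iff)

lemma invertible_gmet: "invertible (gmet f y)"
  unfolding gmet_eq by (rule invertible_mat_1_plus_gram)

lemma ginv_symmetric: "ginv f y $ a $ b = ginv f y $ b $ a"
proof -
  have "transpose (gmet f y) = gmet f y"
    by (simp add: gmet_def transpose_def vec_eq_iff mult.commute)
  then show ?thesis
    unfolding ginv_def by (rule symmetric_matrix_inv[OF invertible_gmet])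
qed

lemma Uinv_eq: "Uinv f y = mat 1 - jac f y ** ginv f y ** transpose (jac f y)"
  unfolding Uinv_def Umat_eq
  by (rule matrix_inv_mat_1_plus_cogram)
    (simp add: ginv_def matrix_inv_right[OF invertible_gmet] flip: gmet_eq)

lemma pd_matrix_jac: "pd_matrix i (jac f) y = hess_slice f i y"
  by (simp add: pd_matrix_def jac_def hess_slice_def hess_def fd1_def fd2_def)

lemma riem_christ_matrix:
  "riem f l i j k y = (pd_matrix i (christ_matrix f j) y - pd_matrix j (christ_matrix f i) y
     + christ_matrix f i y ** christ_matrix f j y - christ_matrix f j y ** christ_matrix f i y) $ l $ k"
  by (simp add: riem_def pd_matrix_def christ_matrix_def matrix_matrix_mult_def sum_subtractf mult.commute)

context
  fixes f :: "real^'n::finite \<Rightarrow> real^'m::finite"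
  assumes smooth: "smooth_map f"
begin

lemma differentiable_pds: "pds is (\<lambda>x. f x $ \<alpha>) differentiable (at y)"
  using smooth unfolding smooth_map_def smooth_fun_def by blast

lemma differentiable_fd1: "fd1 f \<alpha> i differentiable (at y)"
  using differentiable_pds[of "[i]"] by (simp add: fd1_def)

lemma matrix_differentiable_at_jac: "matrix_differentiable_at (jac f) y"
  by (simp add: matrix_differentiable_at_def jac_def differentiable_fd1)

lemma matrix_differentiable_at_hess_slice: "matrix_differentiable_at (hess_slice f i) y"
  using differentiable_pds[of "[i, k]" for k]
  by (simp add: matrix_differentiable_at_def hess_slice_def hess_def fd2_def)

lemma fd2_commute: "fd2 f \<alpha> i j y = fd2 f \<alpha> j i y"
  using differentiable_pds[of "[]"] differentiable_pds[of "[i]"] differentiable_pds[of "[j]"]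
    differentiable_pds[of "[j, i]"] differentiable_pds[of "[i, j]"]
  by (simp add: fd2_def pd_commute differentiable_imp_continuous_within)

lemma hess_symmetric: "hess f \<alpha> y $ a $ b = hess f \<alpha> y $ b $ a"
  by (simp add: hess_def fd2_commute)

lemma pd_matrix_hess_slice_commute: "pd_matrix i (hess_slice f j) y = pd_matrix j (hess_slice f i) y"
proof -
  have "pd i (pd j (pd k (\<lambda>x. f x $ \<alpha>))) y = pd j (pd i (pd k (\<lambda>x. f x $ \<alpha>))) y" for k \<alpha>
    using differentiable_pds[of "[k]"] differentiable_pds[of "[i, k]"] differentiable_pds[of "[j, k]"]
      differentiable_pds[of "[j, i, k]"] differentiable_pds[of "[i, j, k]"]
    by (simp add: pd_commute differentiable_imp_continuous_within)
  then show ?thesis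
    by (simp add: pd_matrix_def hess_slice_def hess_def fd2_def)
qed

lemma matrix_differentiable_at_gmet: "matrix_differentiable_at (gmet f) y"
  by (simp add: matrix_differentiable_at_def gmet_def differentiable_fd1)

lemma matrix_differentiable_at_ginv: "matrix_differentiable_at (ginv f) y"
  unfolding ginv_def[abs_def]
  by (rule matrix_differentiable_at_matrix_inv[OF matrix_differentiable_at_gmet invertible_gmet])

lemma pd_matrix_gmet:
  "pd_matrix i (gmet f) y
    = transpose (transpose (jac f y) ** hess_slice f i y) + transpose (jac f y) ** hess_slice f i y"
proof -
  have "gmet f = (\<lambda>y. mat 1 + transpose (jac f y) ** jac f y)"
    by (simp add: fun_eq_iff gmet_eq)
  then show ?thesis
    by (simp add: pd_matrix_add pd_matrix_mult pd_matrix_const pd_matrix_transpose pd_matrix_jac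
        matrix_differentiable_at_const matrix_differentiable_at_mult matrix_differentiable_at_transpose
        matrix_differentiable_at_jac matrix_transpose_mul)
qed

lemma pd_matrix_ginv: "pd_matrix i (ginv f) y = - (ginv f y ** pd_matrix i (gmet f) y ** ginv f y)"
  unfolding ginv_def[abs_def]
  by (rule pd_matrix_matrix_inv[OF matrix_differentiable_at_gmet invertible_gmet])

lemma christ_matrix_eq: "christ_matrix f i y = ginv f y ** (transpose (jac f y) ** hess_slice f i y)"
proof -
  define C where "C i a b = (\<Sum>\<alpha>\<in>UNIV. fd1 f \<alpha> a y * fd2 f \<alpha> i b y)" for i a b
  have dg: "pd i (\<lambda>y. gmet f y $ j $ l) y = C i l j + C i j l" for i j l
    using arg_cong[OF pd_matrix_gmet[of i y], of "\<lambda>M. M $ j $ l"]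
    by (simp add: C_def pd_matrix_def jac_def hess_slice_def hess_def matrix_matrix_mult_def transpose_def)
  have "pd i (\<lambda>y. gmet f y $ j $ l) y + pd j (\<lambda>y. gmet f y $ i $ l) y - pd l (\<lambda>y. gmet f y $ i $ j) y
      = 2 * C i l j" for j l
    unfolding dg C_def by (simp add: fd2_commute[of _ l i] fd2_commute[of _ l j] fd2_commute[of _ j i])
  then show ?thesis
    by (simp add: christ_matrix_def christ_def C_def vec_eq_iff matrix_matrix_mult_def
        jac_def hess_slice_def hess_def transpose_def)
qed

lemma pd_matrix_christ_matrix:
  "pd_matrix i (christ_matrix f j) y
    = - (ginv f y ** (transpose (transpose (jac f y) ** hess_slice f i y)
          + transpose (jac f y) ** hess_slice f i y) ** ginv f y)
        ** (transpose (jac f y) ** hess_slice f j y)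
      + ginv f y ** (transpose (hess_slice f i y) ** hess_slice f j y
          + transpose (jac f y) ** pd_matrix i (hess_slice f j) y)"
proof -
  have "christ_matrix f j = (\<lambda>y. ginv f y ** (transpose (jac f y) ** hess_slice f j y))"
    by (simp add: fun_eq_iff christ_matrix_eq)
  then show ?thesis
    by (simp add: pd_matrix_mult pd_matrix_transpose pd_matrix_jac pd_matrix_ginv pd_matrix_gmet
        matrix_differentiable_at_mult matrix_differentiable_at_transpose matrix_differentiable_at_jac
        matrix_differentiable_at_hess_slice matrix_differentiable_at_ginv)
qed

lemma riem_gauss:
  "riem f l i j k y = (ginv f y ** (transpose (hess_slice f i y) ** Uinv f y ** hess_slice f j y
      - transpose (hess_slice f j y) ** Uinv f y ** hess_slice f i y)) $ l $ k"
  unfolding riem_christ_matrix pd_matrix_christ_matrix christ_matrix_eq Uinv_eq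
    pd_matrix_hess_slice_commute[of j i]
  by (simp only: curvature_matrix_identity)

lemma ricci_eq:
  "ricci f y = (\<Sum>\<alpha>\<in>UNIV. \<Sum>\<beta>\<in>UNIV. Uinv f y $ \<alpha> $ \<beta> *\<^sub>R
      (trace (ginv f y ** hess f \<alpha> y) *\<^sub>R hess f \<beta> y - hess f \<alpha> y ** ginv f y ** hess f \<beta> y))"
  unfolding vec_eq_iff ricci_def riem_gauss hess_slice_def
  using ricci_contraction[where G = "ginv f y" and S = "\<lambda>\<alpha>. hess f \<alpha> y" and P = "Uinv f y",
      OF ginv_symmetric hess_symmetric]
  by simp

lemma Ashape_eq: "Ashape f \<alpha> y = ginv f y ** hess f \<alpha> y"
  by (simp add: Ashape_def hess_def matrix_matrix_mult_def vec_eq_iff mult.commute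
      ginv_symmetric[of f y] fd2_commute[of \<alpha> _ _ y])

lemma Rc_eq:
  "Rc f y = (\<Sum>\<mu>\<in>UNIV. \<Sum>\<nu>\<in>UNIV. Uinv f y $ \<mu> $ \<nu> *\<^sub>R
      (trace (Ashape f \<mu> y) *\<^sub>R Ashape f \<nu> y - Ashape f \<mu> y ** Ashape f \<nu> y))"
  unfolding Rc_def ricci_eq Ashape_eq
  by (simp add: matrix_sum_right matrix_diff_ldistrib matrix_scalar_ac matrix_mul_assoc
      scaleR_right_diff_distrib mult.commute flip: scalar_matrix_assoc)

end

theorem lemma2p2:
  fixes f :: "real^'n \<Rightarrow> real^'m"
  assumes "smooth_map f"
  shows "\<forall>x \<alpha>. Ashape f \<alpha> x ** Rc f x - Rc f x ** Ashape f \<alpha> x =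
    (\<Sum>\<mu>\<in>UNIV. \<Sum>\<nu>\<in>UNIV. Uinv f x $ \<mu> $ \<nu> *\<^sub>R
       (trace (Ashape f \<mu> x) *\<^sub>R Rperp f \<nu> \<alpha> x + Rperp f \<alpha> \<mu> x ** Ashape f \<nu> x
        + Ashape f \<mu> x ** Rperp f \<alpha> \<nu> x))"
  unfolding Rc_eq[OF assms] Rperp_def
  by (intro allI commutator_trace_quadratic_sum)

end
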